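(* Let $G$ be a finite simple graph with edge weight function $w$ and vertex weight function $w_1$, let $\theta$ be a real number, and let $p$ be a path of length at least $1$ in $G$. Then $\mathrm{mult}(\theta,G\setminus p)\ge \mathrm{mult}(\theta,G)-1$, where $G\setminus p$ denotes $G$ with all vertices of $p$ deleted.
   Context: An edge weight function $w$ assigns a nonzero complex number to each edge; a vertex weight function $w_1$ assigns a real number (possibly $0$) to each vertex; subgraphs carry restricted weights; deleting vertices also deletes incident edges. For $A\subseteq E(G)$, $w(A)=\prod_{e\in A}w(e)$. $\mu_w(G,x)=\sum_{M}(-1)^{|M|}|w(M)|^2x^{n-2|M|}$ over all matchings $M$ (including empty). $\eta_{(w,w_1)}(G,x)=\sum_{S\subseteq V(G)}(-1)^{|V(G)\setminus S|}\big(\prod_{y\in V(G)\setminus S}w_1(y)\big)\mu_w(G[S],x)$ with $G[S]$ the induced subgraph; $\mu_w,\eta_{(w,w_1)}$ of the empty graph equal $1$. $\mathrm{mult}(\theta,H)$ is the multiplicity of $\theta$ as a root of $\eta_{(w,w_1)}(H,x)$ ($0$ if not a root). *)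

theory Defs
  imports Complex_Main "HOL-Computational_Algebra.Polynomial"
begin

definition simple_graph :: "'a set \<Rightarrow> 'a set set \<Rightarrow> bool" where
  "simple_graph V E \<longleftrightarrow> finite V \<and>
     (\<forall>e\<in>E. \<exists>u v. u \<noteq> v \<and> u \<in> V \<and> v \<in> V \<and> e = {u, v})"

definition matchings :: "'a set set \<Rightarrow> 'a set set set" where
  "matchings E = {M. M \<subseteq> E \<and> (\<forall>e\<in>M. \<forall>f\<in>M. e \<noteq> f \<longrightarrow> e \<inter> f = {})}"

definition mu_w :: "'a set \<Rightarrow> 'a set set \<Rightarrow> ('a set \<Rightarrow> complex) \<Rightarrow> real poly" where
  "mu_w V E w = (\<Sum>M\<in>matchings E.
      monom ((-1) ^ card M * (cmod (\<Prod>e\<in>M. w e))^2) (card V - 2 * card M))"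

definition induced_edges :: "'a set set \<Rightarrow> 'a set \<Rightarrow> 'a set set" where
  "induced_edges E S = {e\<in>E. e \<subseteq> S}"

definition eta :: "'a set \<Rightarrow> 'a set set \<Rightarrow> ('a set \<Rightarrow> complex) \<Rightarrow> ('a \<Rightarrow> real) \<Rightarrow> real poly" where
  "eta V E w w1 = (\<Sum>S\<in>Pow V.
      smult ((-1) ^ card (V - S) * (\<Prod>y\<in>V - S. w1 y)) (mu_w S (induced_edges E S) w))"

definition mult :: "real \<Rightarrow> 'a set \<Rightarrow> 'a set set \<Rightarrow> ('a set \<Rightarrow> complex) \<Rightarrow> ('a \<Rightarrow> real) \<Rightarrow> nat" where
  "mult \<theta> V E w w1 = order \<theta> (eta V E w w1)"

text \<open>A path given by its vertex list; its length is the number of edges, length ps - 1.\<close>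
definition is_path :: "'a set \<Rightarrow> 'a set set \<Rightarrow> 'a list \<Rightarrow> bool" where
  "is_path V E ps \<longleftrightarrow> ps \<noteq> [] \<and> distinct ps \<and> set ps \<subseteq> V \<and>
     (\<forall>i. Suc i < length ps \<longrightarrow> {ps ! i, ps ! Suc i} \<in> E)"

definition del_verts :: "'a set \<Rightarrow> 'a set \<Rightarrow> 'a set" where
  "del_verts V D = V - D"
definition del_edges :: "'a set set \<Rightarrow> 'a set \<Rightarrow> 'a set set" where
  "del_edges E D = {e\<in>E. e \<inter> D = {}}"

end

theory Submission
  imports Defs
begin

text \<open>
Write \<open>\<eta> S\<close> for the polynomial of the subgraph induced on \<open>S\<close>. Expanding the definition
of \<open>eta\<close> shows that every vertex not covered by a matching contributes a factor
\<open>x - w1 v\<close>, whence \<open>\<eta>' S = \<Sum>v\<in>S. \<eta> (S - {v})\<close> and the vertex recursion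
\<open>\<eta> S = (x - w1 u) \<eta> (S - {u}) - \<Sum>v\<sim>u. |w uv|\<^sup>2 \<eta> (S - {u, v})\<close>. From the recursion
one obtains by induction the Heilmann--Lieb identity
\<open>\<eta> (S - {u}) \<eta> (S - {v}) - \<eta> S \<eta> (S - {u, v}) = \<Sum>P. |w P|\<^sup>2 \<eta> (S - P)\<^sup>2\<close>
over the paths \<open>P\<close> from \<open>u\<close> to \<open>v\<close>. Summing over \<open>v\<close> expresses the Wronskian
\<open>\<eta> (S - {u}) \<eta>' S - \<eta> S \<eta>' (S - {u})\<close> as a nonnegative combination of the squares
\<open>\<eta> (S - P)\<^sup>2\<close>, \<open>P\<close> ranging over all paths starting at \<open>u\<close> (including \<open>[u]\<close>).

If \<open>\<theta>\<close> is a root of multiplicity \<open>m\<close> of \<open>\<eta> S\<close> and \<open>k\<close> of \<open>\<eta> (S - {u})\<close>, the Wronskian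
vanishes to order \<open>m + k - 1\<close> at \<open>\<theta>\<close>. A nonnegative combination of squares of real
polynomials vanishing to order \<open>2s - 1\<close> forces each square with positive weight to vanish
to order \<open>2s\<close>; with \<open>s = (m + k) div 2\<close> this gives \<open>s \<le> k\<close>, hence \<open>s \<ge> m - 1\<close>, and
\<open>\<eta> (S - P)\<close> has \<open>\<theta>\<close> as a root of multiplicity at least \<open>s\<close>.
\<close>

lemma smult_sum_right: "smult a (sum f A) = (\<Sum>x\<in>A. smult a (f x))"
  by (induction A rule: infinite_finite_induct) (auto simp: smult_add_right)

lemma pderiv_sum: "pderiv (sum f A) = (\<Sum>x\<in>A. pderiv (f x))"
  by (induction A rule: infinite_finite_induct) (auto simp: pderiv_add)

lemma linear_power_dvd_pderiv:
  fixes p :: "'a::idom poly"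
  assumes "[:-a, 1:] ^ n dvd p"
  shows "[:-a, 1:] ^ (n - 1) dvd pderiv p"
proof (cases n)
  case (Suc k)
  obtain q where "p = [:-a, 1:] ^ Suc k * q" using assms Suc by blast
  then have "pderiv p = [:-a, 1:] ^ Suc k * pderiv q + smult (of_nat (Suc k)) (q * [:-a, 1:] ^ k)"
    by (simp only: lemma_order_pderiv1)
  moreover have "[:-a, 1:] ^ k dvd [:-a, 1:] ^ Suc k * pderiv q"
    unfolding power_Suc2 mult.assoc by (rule dvd_triv_left)
  ultimately show ?thesis using Suc by (metis dvd_add dvd_smult dvd_triv_right diff_Suc_1)
qed simp

lemma linear_power_dvd_wronskian:
  fixes f g :: "'a::idom poly"
  shows "[:-a, 1:] ^ (order a f + order a g - 1) dvd g * pderiv f - f * pderiv g"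
proof -
  define p where "p = [:-a, 1:]"
  have "p ^ order a f dvd f" "p ^ order a g dvd g"
    unfolding p_def by (rule order_1)+
  moreover have "p ^ (order a f - 1) dvd pderiv f" "p ^ (order a g - 1) dvd pderiv g"
    unfolding p_def by (rule order_1[THEN linear_power_dvd_pderiv])+
  ultimately have "p ^ (order a g + (order a f - 1)) dvd g * pderiv f"
    and "p ^ (order a f + (order a g - 1)) dvd f * pderiv g"
    unfolding power_add by (auto intro: mult_dvd_mono)
  then show ?thesis
    unfolding p_def by (intro dvd_diff) (erule power_le_dvd; linarith)+
qed

lemma prod_linear_factors_expand:
  fixes c :: "'a \<Rightarrow> 'b::comm_ring_1"
  assumes "finite R"
  shows "(\<Prod>v\<in>R. [:-c v, 1:]) =
    (\<Sum>X\<in>Pow R. smult ((-1) ^ card (R - X) * (\<Prod>v\<in>R - X. c v)) ([:0, 1:] ^ card X))"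
proof -
  have "(\<Prod>v\<in>R. [:-c v, 1:]) = (\<Prod>v\<in>R. [:0, 1:] + [:-c v:])"
    by simp
  also have "\<dots> = (\<Sum>X\<in>Pow R. (\<Prod>v\<in>X. [:0, 1:]) * (\<Prod>v\<in>R - X. [:-c v:]))"
    by (rule prod_add[OF assms])
  also have "\<dots> = (\<Sum>X\<in>Pow R. smult ((-1) ^ card (R - X) * (\<Prod>v\<in>R - X. c v)) ([:0, 1:] ^ card X))"
  proof (intro sum.cong refl)
    fix X
    have "(\<Prod>v\<in>R - X. [:-c v:]) = [:(-1) ^ card (R - X) * (\<Prod>v\<in>R - X. c v):]"
      by (simp add: prod_to_poly prod_uminus)
    then show "(\<Prod>v\<in>X. [:0, 1:]) * (\<Prod>v\<in>R - X. [:-c v:])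
      = smult ((-1) ^ card (R - X) * (\<Prod>v\<in>R - X. c v)) ([:0, 1:] ^ card X)"
      by (simp add: mult.commute)
  qed
  finally show ?thesis .
qed

lemma sum_supersets_reindex:
  assumes "U \<subseteq> S"
  shows "(\<Sum>T\<in>{T\<in>Pow S. U \<subseteq> T}. f T) = (\<Sum>X\<in>Pow (S - U). f (U \<union> X))"
proof -
  have "{T\<in>Pow S. U \<subseteq> T} = (\<union>) U ` Pow (S - U)"
  proof (intro equalityI subsetI)
    fix T assume "T \<in> {T\<in>Pow S. U \<subseteq> T}"
    then have "T = U \<union> (T - U)" "T - U \<in> Pow (S - U)" by auto
    then show "T \<in> (\<union>) U ` Pow (S - U)" by blast
  qed (use assms in auto)
  moreover have "inj_on ((\<union>) U) (Pow (S - U))"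
    by (auto simp: inj_on_def)
  ultimately show ?thesis by (simp add: sum.reindex)
qed

lemma sum_supersets_linear_factors:
  fixes c :: "'a \<Rightarrow> 'b::comm_ring_1"
  assumes "finite S" "U \<subseteq> S"
  shows "(\<Sum>T\<in>{T\<in>Pow S. U \<subseteq> T}.
      smult ((-1) ^ card (S - T) * (\<Prod>v\<in>S - T. c v)) ([:0, 1:] ^ (card T - card U)))
    = (\<Prod>v\<in>S - U. [:-c v, 1:])"
proof -
  have "S - (U \<union> X) = S - U - X" for X by auto
  moreover have "card (U \<union> X) - card U = card X" if "X \<subseteq> S - U" for X
    using that assms by (subst card_Un_disjoint) (auto intro: finite_subset)
  ultimately show ?thesis
    unfolding sum_supersets_reindex[OF assms(2)]
      prod_linear_factors_expand[OF finite_Diff[OF assms(1)]]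
    by (intro sum.cong refl) simp
qed

lemma linear_power_dvd_weighted_sum_squares:
  fixes q :: "'i \<Rightarrow> real poly"
  assumes "finite I" and nonneg: "\<And>i. i \<in> I \<Longrightarrow> 0 \<le> c i" and "j \<in> I" "0 < c j"
    and "[:-\<theta>, 1:] ^ (2 * s - 1) dvd (\<Sum>i\<in>I. smult (c i) (q i ^ 2))"
  shows "[:-\<theta>, 1:] ^ s dvd q j"
  using assms(3-5)
proof (induction s arbitrary: j)
  case (Suc s)
  define p where "p = [:-\<theta>, 1:]"
  have "p ^ (2 * s - 1) dvd (\<Sum>i\<in>I. smult (c i) (q i ^ 2))"
    using Suc.prems(3) unfolding p_def by (rule power_le_dvd) simp
  then have IH: "p ^ s dvd q i" if "i \<in> I" "0 < c i" for i
    using Suc.IH that unfolding p_def by blast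
  \<comment> \<open>After dividing out \<open>p ^ (2 * s)\<close>, a nonnegative combination of squares vanishes at
    \<open>\<theta>\<close>, so each square with positive weight vanishes there.\<close>
  define r where "r i = q i div p ^ s" for i
  have "smult (c i) (q i ^ 2) = p ^ (2 * s) * smult (c i) (r i ^ 2)" if "i \<in> I" for i
  proof (cases "c i = 0")
    case False
    then have "q i = p ^ s * r i" using IH that nonneg unfolding r_def by fastforce
    then show ?thesis by (simp add: power_mult_distrib mult.commute[of 2 s] flip: power_mult)
  qed simp
  then have sum_eq: "(\<Sum>i\<in>I. smult (c i) (q i ^ 2)) = p ^ (2 * s) * (\<Sum>i\<in>I. smult (c i) (r i ^ 2))"
    by (simp add: sum_distrib_left)
  have "p ^ (2 * s) * p dvd p ^ (2 * s) * (\<Sum>i\<in>I. smult (c i) (r i ^ 2))"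
    using Suc.prems(3) unfolding sum_eq p_def by (simp add: power_Suc2)
  moreover have "p ^ (2 * s) \<noteq> 0" unfolding p_def by simp
  ultimately have "p dvd (\<Sum>i\<in>I. smult (c i) (r i ^ 2))"
    by auto
  then have "(\<Sum>i\<in>I. c i * poly (r i) \<theta> ^ 2) = 0"
    unfolding p_def by (simp add: poly_eq_0_iff_dvd[symmetric] poly_sum)
  then have "\<forall>i\<in>I. c i * poly (r i) \<theta> ^ 2 = 0"
    using nonneg by (subst (asm) sum_nonneg_eq_0_iff[OF \<open>finite I\<close>]) auto
  then have "c j * poly (r j) \<theta> ^ 2 = 0"
    using Suc.prems(1) by blast
  then have "p dvd r j"
    using Suc.prems(2) unfolding p_def by (simp add: poly_eq_0_iff_dvd)
  then have "p ^ s * p dvd p ^ s * r j" by simp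
  then show ?case
    using IH[OF Suc.prems(1,2)] unfolding p_def r_def by (simp add: power_Suc2)
qed simp

definition sq_weight :: "('a set \<Rightarrow> complex) \<Rightarrow> 'a \<Rightarrow> 'a \<Rightarrow> real" where
  "sq_weight w u v = (cmod (w {u, v}))^2"

fun path_weight :: "('a set \<Rightarrow> complex) \<Rightarrow> 'a list \<Rightarrow> real" where
  "path_weight w (u # v # P) = sq_weight w u v * path_weight w (v # P)"
| "path_weight w _ = 1"

lemma path_weight_nonneg: "0 \<le> path_weight w P"
  by (induction w P rule: path_weight.induct) (simp_all add: sq_weight_def)

lemma path_weight_pos:
  assumes "\<And>i. Suc i < length P \<Longrightarrow> w {P ! i, P ! Suc i} \<noteq> 0"
  shows "0 < path_weight w P"
  using assms
proof (induction w P rule: path_weight.induct)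
  case (1 w u v P)
  have "w {u, v} \<noteq> 0" using "1.prems"[of 0] by simp
  moreover have "0 < path_weight w (v # P)"
    using "1.IH" "1.prems" by (metis Suc_mono length_Cons nth_Cons_Suc)
  ultimately show ?case by (simp add: sq_weight_def)
qed simp_all

lemma is_path_Cons:
  "is_path S E (u # P) \<longleftrightarrow> u \<in> S \<and> (P = [] \<or> {u, hd P} \<in> E \<and> is_path (S - {u}) E P)"
proof (cases P)
  case (Cons x r)
  have "(\<forall>i. Suc i < length (u # P) \<longrightarrow> {(u # P) ! i, (u # P) ! Suc i} \<in> E)
    \<longleftrightarrow> {u, x} \<in> E \<and> (\<forall>i. Suc i < length P \<longrightarrow> {P ! i, P ! Suc i} \<in> E)"
    (is "?L \<longleftrightarrow> ?R")
  proof
    assume ?L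
    then show ?R using Cons by (metis Suc_less_eq length_Cons nth_Cons_0 nth_Cons_Suc zero_less_Suc)
  next
    assume ?R
    then show ?L
      using Cons by (metis Suc_less_eq length_Cons less_Suc_eq_0_disj nth_Cons_0 nth_Cons_Suc)
  qed
  then show ?thesis using Cons unfolding is_path_def by auto
qed (simp add: is_path_def)

locale edge_weighted_graph =
  fixes E :: "'a set set" and w :: "'a set \<Rightarrow> complex" and w1 :: "'a \<Rightarrow> real"
  assumes two_elem_edges: "e \<in> E \<Longrightarrow> \<exists>a b. a \<noteq> b \<and> e = {a, b}"
begin

abbreviation \<eta> :: "'a set \<Rightarrow> real poly" where
  "\<eta> S \<equiv> eta S E w w1"

abbreviation matchings_in :: "'a set \<Rightarrow> 'a set set set" where
  "matchings_in S \<equiv> matchings (induced_edges E S)"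

definition match_coeff :: "'a set set \<Rightarrow> real" where
  "match_coeff M = (-1) ^ card M * (cmod (\<Prod>e\<in>M. w e))^2"

definition matching_term :: "'a set \<Rightarrow> 'a set set \<Rightarrow> real poly" where
  "matching_term S M = smult (match_coeff M) (\<Prod>v\<in>S - \<Union>M. [:-w1 v, 1:])"

lemma finite_matchings_in: "finite S \<Longrightarrow> finite (matchings_in S)"
proof -
  assume "finite S"
  have "matchings_in S \<subseteq> Pow (Pow S)"
    unfolding matchings_def induced_edges_def by auto
  then show ?thesis using \<open>finite S\<close> by (meson finite_Pow_iff finite_subset)
qed

lemma finite_matching:
  assumes "finite S" "M \<in> matchings_in S"
  shows "finite M"
proof -
  have "M \<subseteq> Pow S" using assms(2) unfolding matchings_def induced_edges_def by auto
  then show ?thesis using assms(1) by (simp add: finite_subset)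
qed

lemma Union_matching_subset: "M \<in> matchings_in S \<Longrightarrow> \<Union>M \<subseteq> S"
  unfolding matchings_def induced_edges_def by auto

lemma matchings_in_subset:
  "T \<subseteq> S \<Longrightarrow> matchings_in T = {M \<in> matchings_in S. \<Union>M \<subseteq> T}"
  unfolding matchings_def induced_edges_def by auto

lemma card_Union_matching:
  assumes "M \<in> matchings_in S"
  shows "card (\<Union>M) = 2 * card M"
proof -
  have edges: "card e = 2 \<and> finite e" if "e \<in> M" for e
    using that assms two_elem_edges unfolding matchings_def induced_edges_def by fastforce
  have "pairwise disjnt M"
    using assms unfolding matchings_def pairwise_def disjnt_def by auto
  then have "card (\<Union>M) = sum card M" using card_Union_disjoint edges by blast
  also have "\<dots> = 2 * card M" using edges by simp
  finally show ?thesis .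
qed

lemma eta_prod_form:
  assumes "finite S"
  shows "\<eta> S = sum (matching_term S) (matchings_in S)"
proof -
  define sgn where "sgn T = (-1) ^ card (S - T) * (\<Prod>v\<in>S - T. w1 v)" for T
  have "\<eta> S = (\<Sum>T\<in>Pow S. \<Sum>M\<in>{M \<in> matchings_in S. \<Union>M \<subseteq> T}.
      smult (match_coeff M) (smult (sgn T) ([:0, 1:] ^ (card T - 2 * card M))))"
    unfolding eta_def mu_w_def
    by (intro sum.cong refl) (simp add: matchings_in_subset smult_sum_right monom_altdef
        sgn_def match_coeff_def mult_ac)
  also have "\<dots> = (\<Sum>M\<in>matchings_in S. \<Sum>T\<in>{T\<in>Pow S. \<Union>M \<subseteq> T}.
      smult (match_coeff M) (smult (sgn T) ([:0, 1:] ^ (card T - card (\<Union>M)))))"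
    using assms by (subst sum.swap_restrict) (simp_all add: finite_matchings_in card_Union_matching)
  also have "\<dots> = sum (matching_term S) (matchings_in S)"
  proof (intro sum.cong refl)
    fix M assume "M \<in> matchings_in S"
    then show "(\<Sum>T\<in>{T\<in>Pow S. \<Union>M \<subseteq> T}.
        smult (match_coeff M) (smult (sgn T) ([:0, 1:] ^ (card T - card (\<Union>M)))))
      = matching_term S M"
      unfolding smult_sum_right[symmetric] sgn_def matching_term_def
      by (simp only: sum_supersets_linear_factors[OF assms Union_matching_subset])
  qed
  finally show ?thesis .
qed

lemma pderiv_eta:
  assumes "finite S"
  shows "pderiv (\<eta> S) = (\<Sum>v\<in>S. \<eta> (S - {v}))"
proof -
  have pderiv_factors: "pderiv (\<Prod>v\<in>R. [:-w1 v, 1:]) = (\<Sum>v\<in>R. \<Prod>x\<in>R - {v}. [:-w1 x, 1:])" for R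
    by (simp add: pderiv_prod pderiv_pCons)
  have "pderiv (\<eta> S) = (\<Sum>M\<in>matchings_in S. \<Sum>v\<in>{v\<in>S. v \<notin> \<Union>M}.
      smult (match_coeff M) (\<Prod>x\<in>(S - {v}) - \<Union>M. [:-w1 x, 1:]))"
    unfolding eta_prod_form[OF assms] matching_term_def pderiv_sum pderiv_smult pderiv_factors
      smult_sum_right
    by (intro sum.cong refl) (auto simp flip: Diff_insert Diff_insert2)
  also have "\<dots> = (\<Sum>v\<in>S. \<Sum>M\<in>{M \<in> matchings_in S. v \<notin> \<Union>M}.
      smult (match_coeff M) (\<Prod>x\<in>(S - {v}) - \<Union>M. [:-w1 x, 1:]))"
    using assms by (intro sum.swap_restrict) (simp_all add: finite_matchings_in)
  also have "\<dots> = (\<Sum>v\<in>S. \<eta> (S - {v}))"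
  proof -
    have "matchings_in (S - {v}) = {M \<in> matchings_in S. v \<notin> \<Union>M}" for v
      using matchings_in_subset[of "S - {v}" S] Union_matching_subset[of _ S] by blast
    then show ?thesis using assms by (simp add: eta_prod_form matching_term_def)
  qed
  finally show ?thesis .
qed

lemma coeff_eta_card:
  assumes "finite S"
  shows "coeff (\<eta> S) (card S) = 1"
proof -
  have factors: "degree (\<Prod>v\<in>R. [:-w1 v, 1:]) = card R \<and> coeff (\<Prod>v\<in>R. [:-w1 v, 1:]) (card R) = 1"
    for R
  proof -
    have "degree (\<Prod>v\<in>R. [:-w1 v, 1:]) = card R"
      by (simp add: degree_prod_sum_eq)
    moreover have "lead_coeff (\<Prod>v\<in>R. [:-w1 v, 1:]) = 1"
      by (simp add: lead_coeff_prod)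
    ultimately show ?thesis by simp
  qed
  have "coeff (matching_term S M) (card S) = (if M = {} then 1 else 0)"
    if M: "M \<in> matchings_in S" for M
  proof (cases "M = {}")
    case True
    then show ?thesis using factors[of S] by (simp add: matching_term_def match_coeff_def)
  next
    case False
    have "finite M" using assms M by (rule finite_matching)
    with False have "0 < card (\<Union>M)" using card_Union_matching[OF M] by (simp add: card_gt_0_iff)
    moreover have "\<Union>M \<subseteq> S" using M by (rule Union_matching_subset)
    ultimately have "card (S - \<Union>M) < card S"
      using assms
      by (metis card_Diff_subset card_mono diff_less finite_subset le_zero_eq not_gr_zero)
    then show ?thesis using False factors[of "S - \<Union>M"] by (simp add: matching_term_def coeff_eq_0)
  qed
  moreover have "{} \<in> matchings_in S" unfolding matchings_def by simp
  ultimately show ?thesis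
    using finite_matchings_in[OF assms] by (simp add: eta_prod_form[OF assms] coeff_sum)
qed

lemma eta_nonzero: "finite S \<Longrightarrow> \<eta> S \<noteq> 0"
  using coeff_eta_card by fastforce

lemma singleton_notin_edges: "{u} \<notin> E"
proof
  assume "{u} \<in> E"
  then obtain a b where "a \<noteq> b" "{u} = {a, b}" using two_elem_edges by blast
  then show False by (metis insert_iff singletonD)
qed

lemma edge_incident:
  assumes "e \<in> E" "u \<in> e"
  obtains v where "e = {u, v}" "v \<noteq> u"
  using two_elem_edges[OF assms(1)] assms(2) by auto

lemma insert_edge_matching:
  assumes "M \<in> matchings_in (S - e)" "e \<in> E" "e \<subseteq> S"
  shows "insert e M \<in> matchings_in S"
  using assms unfolding matchings_def induced_edges_def by blast

lemma remove_edge_matching: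
  assumes "M \<in> matchings_in S" "e \<in> M"
  shows "M - {e} \<in> matchings_in (S - e)"
  using assms unfolding matchings_def induced_edges_def by blast

lemma edge_notin_matching_avoiding:
  assumes "M \<in> matchings_in (S - e)" "e \<in> E"
  shows "e \<notin> M"
  using assms two_elem_edges[OF assms(2)] unfolding matchings_def induced_edges_def by blast

lemma matching_edges_disjoint: "M \<in> matchings E' \<Longrightarrow> e \<in> M \<Longrightarrow> f \<in> M \<Longrightarrow> e \<noteq> f \<Longrightarrow> e \<inter> f = {}"
  unfolding matchings_def by blast

lemma matchings_covering_vertex:
  "{M \<in> matchings_in S. u \<in> \<Union>M} = (\<Union>v\<in>{v\<in>S. {u, v} \<in> E}. {M \<in> matchings_in S. {u, v} \<in> M})"
proof (intro equalityI subsetI)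
  fix M assume "M \<in> {M \<in> matchings_in S. u \<in> \<Union>M}"
  then obtain e where M: "M \<in> matchings_in S" and e: "e \<in> M" "u \<in> e" by blast
  have "e \<in> E" "e \<subseteq> S" using M e unfolding matchings_def induced_edges_def by auto
  with e obtain v where "e = {u, v}" by (blast elim: edge_incident)
  with M e \<open>e \<in> E\<close> \<open>e \<subseteq> S\<close> show "M \<in> (\<Union>v\<in>{v\<in>S. {u, v} \<in> E}. {M \<in> matchings_in S. {u, v} \<in> M})"
    by auto
qed blast

lemma matchings_containing_edge:
  assumes "e \<in> E" "e \<subseteq> S"
  shows "{M \<in> matchings_in S. e \<in> M} = insert e ` matchings_in (S - e)"
proof (intro equalityI subsetI)
  fix M assume "M \<in> {M \<in> matchings_in S. e \<in> M}"
  then have "M = insert e (M - {e})" "M - {e} \<in> matchings_in (S - e)"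
    by (auto intro: remove_edge_matching)
  then show "M \<in> insert e ` matchings_in (S - e)" by blast
qed (auto intro: insert_edge_matching[OF _ assms])

lemma inj_on_insert_edge: "e \<in> E \<Longrightarrow> inj_on (insert e) (matchings_in (S - e))"
  using edge_notin_matching_avoiding unfolding inj_on_def by (metis insert_ident)

lemma match_coeff_insert:
  "finite M \<Longrightarrow> e \<notin> M \<Longrightarrow> match_coeff (insert e M) = - ((cmod (w e))^2 * match_coeff M)"
  by (simp add: match_coeff_def norm_mult power_mult_distrib)

lemma sum_matching_term_avoiding:
  assumes "finite S" "u \<in> S"
  shows "sum (matching_term S) (matchings_in (S - {u})) = [:-w1 u, 1:] * \<eta> (S - {u})"
proof -
  have "matching_term S M = [:-w1 u, 1:] * matching_term (S - {u}) M"
    if "M \<in> matchings_in (S - {u})" for M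
  proof -
    have "S - \<Union>M = insert u (S - {u} - \<Union>M)"
      using that assms(2) Union_matching_subset by blast
    then show ?thesis using assms(1) by (simp add: matching_term_def)
  qed
  then show ?thesis using assms(1) by (simp add: eta_prod_form sum_distrib_left)
qed

lemma sum_matching_term_containing_edge:
  assumes "finite S" "e \<in> E" "e \<subseteq> S"
  shows "sum (matching_term S) {M \<in> matchings_in S. e \<in> M} = - smult ((cmod (w e))^2) (\<eta> (S - e))"
proof -
  have "matching_term S (insert e M) = - smult ((cmod (w e))^2) (matching_term (S - e) M)"
    if M: "M \<in> matchings_in (S - e)" for M
  proof -
    have "finite M" using assms(1) by (intro finite_matching[OF _ M]) simp
    moreover have "e \<notin> M" using M assms(2) by (rule edge_notin_matching_avoiding)
    moreover have "S - \<Union>(insert e M) = S - e - \<Union>M" by auto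
    ultimately show ?thesis by (simp add: matching_term_def match_coeff_insert)
  qed
  then show ?thesis
    using assms(1) inj_on_insert_edge[OF assms(2)]
    unfolding matchings_containing_edge[OF assms(2,3)]
    by (simp add: sum.reindex eta_prod_form smult_sum_right sum_negf)
qed

lemma eta_remove_vertex:
  assumes "finite S" "u \<in> S"
  shows "\<eta> S = [:-w1 u, 1:] * \<eta> (S - {u})
    - (\<Sum>v\<in>{v\<in>S. {u, v} \<in> E}. smult (sq_weight w u v) (\<eta> (S - {u, v})))"
proof -
  define N where "N = {v\<in>S. {u, v} \<in> E}"
  define covering where "covering v = {M \<in> matchings_in S. {u, v} \<in> M}" for v
  have fin: "finite (matchings_in T)" if "T \<subseteq> S" for T
    using finite_matchings_in finite_subset[OF that assms(1)] by blast
  have "finite N" using assms(1) unfolding N_def by simp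
  have avoiding: "matchings_in (S - {u}) = {M \<in> matchings_in S. u \<notin> \<Union>M}"
    using matchings_in_subset[of "S - {u}" S] Union_matching_subset[of _ S] by blast
  have split_matchings: "matchings_in S = matchings_in (S - {u}) \<union> (\<Union>v\<in>N. covering v)"
    using matchings_covering_vertex[of S u] unfolding avoiding N_def covering_def by blast
  have "\<eta> S = sum (matching_term S) (matchings_in (S - {u}))
      + sum (matching_term S) (\<Union>v\<in>N. covering v)"
    unfolding eta_prod_form[OF assms(1)] split_matchings
  proof (rule sum.union_disjoint)
    show "finite (matchings_in (S - {u}))" using fin by simp
    show "finite (\<Union>v\<in>N. covering v)"
      using fin[of S] by (rule finite_subset[rotated]) (auto simp: covering_def)
    show "matchings_in (S - {u}) \<inter> (\<Union>v\<in>N. covering v) = {}"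
      unfolding avoiding covering_def by blast
  qed
  also have "sum (matching_term S) (\<Union>v\<in>N. covering v) = (\<Sum>v\<in>N. sum (matching_term S) (covering v))"
  proof (rule sum.UNION_disjoint)
    show "\<forall>v\<in>N. \<forall>v'\<in>N. v \<noteq> v' \<longrightarrow> covering v \<inter> covering v' = {}"
    proof (intro ballI impI)
      fix v v' assume "v \<in> N" "v' \<in> N" "v \<noteq> v'"
      then have "{u, v} \<noteq> {u, v'}" "{u, v} \<inter> {u, v'} \<noteq> {}" by (auto simp: doubleton_eq_iff)
      then show "covering v \<inter> covering v' = {}"
        unfolding covering_def using matching_edges_disjoint by blast
    qed
  qed (use fin \<open>finite N\<close> in \<open>auto simp: covering_def\<close>)
  also have "\<dots> = - (\<Sum>v\<in>N. smult (sq_weight w u v) (\<eta> (S - {u, v})))"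
    using assms unfolding covering_def N_def
    by (simp add: sum_matching_term_containing_edge sq_weight_def sum_negf)
  finally show ?thesis
    using sum_matching_term_avoiding[OF assms] unfolding N_def by simp
qed

lemma eta_remove_vertex_split:
  assumes "finite S" "u \<in> S" "v \<in> S"
  shows "\<eta> S = [:-w1 u, 1:] * \<eta> (S - {u})
    - (if {u, v} \<in> E then smult (sq_weight w u v) (\<eta> (S - {u, v})) else 0)
    - (\<Sum>i\<in>{i\<in>S - {v}. {u, i} \<in> E}. smult (sq_weight w u i) (\<eta> (S - {u, i})))"
proof -
  define N where "N = {i\<in>S - {v}. {u, i} \<in> E}"
  have "finite N" using assms(1) unfolding N_def by simp
  have "{i\<in>S. {u, i} \<in> E} = (if {u, v} \<in> E then insert v N else N)" "v \<notin> N"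
    using assms(3) unfolding N_def by auto
  then show ?thesis
    using eta_remove_vertex[OF assms(1,2)] \<open>finite N\<close> unfolding N_def[symmetric]
    by (cases "{u, v} \<in> E") (simp_all add: algebra_simps)
qed

definition paths :: "'a set \<Rightarrow> 'a \<Rightarrow> 'a \<Rightarrow> 'a list set" where
  "paths S u v = {P. is_path S E P \<and> hd P = u \<and> last P = v}"

lemma finite_paths: "finite S \<Longrightarrow> finite (paths S u v)"
  by (rule finite_subset[OF _ finite_subset_distinct]) (auto simp: paths_def is_path_def)

lemma paths_Cons_decomp:
  assumes "u \<in> S" "v \<in> S" "u \<noteq> v"
  shows "paths S u v = (if {u, v} \<in> E then {[u, v]} else {})
    \<union> (\<Union>i\<in>{i\<in>S - {v}. {u, i} \<in> E}. (#) u ` paths (S - {u}) i v)"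
proof (intro equalityI subsetI)
  fix P assume "P \<in> paths S u v"
  then have P: "is_path S E P" "hd P = u" "last P = v" by (auto simp: paths_def)
  then obtain P' where P': "P = u # P'" unfolding is_path_def by (cases P) auto
  with P assms(3) obtain i r where P'_def: "P' = i # r" by (cases P') auto
  have tail: "{u, i} \<in> E" "is_path (S - {u}) E P'"
    using P(1) by (simp_all add: P' P'_def is_path_Cons)
  show "P \<in> (if {u, v} \<in> E then {[u, v]} else {})
    \<union> (\<Union>i\<in>{i\<in>S - {v}. {u, i} \<in> E}. (#) u ` paths (S - {u}) i v)"
  proof (cases "i = v")
    case True
    have "distinct P'" "last P' = v" using tail(2) P(3) by (auto simp: P' P'_def is_path_def)
    then have "r = []" using True by (auto simp: P'_def split: if_splits)
    then show ?thesis using tail(1) True by (simp add: P' P'_def)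
  next
    case False
    have "i \<in> S" using tail(2) by (simp add: P'_def is_path_def)
    moreover have "P' \<in> paths (S - {u}) i v"
      using tail(2) P(3) by (simp add: paths_def P' P'_def)
    ultimately show ?thesis using tail(1) False by (auto simp: P')
  qed
next
  fix P assume "P \<in> (if {u, v} \<in> E then {[u, v]} else {})
    \<union> (\<Union>i\<in>{i\<in>S - {v}. {u, i} \<in> E}. (#) u ` paths (S - {u}) i v)"
  then show "P \<in> paths S u v"
  proof (elim UnE)
    assume "P \<in> (if {u, v} \<in> E then {[u, v]} else {})"
    then show ?thesis using assms by (auto simp: paths_def is_path_Cons split: if_splits)
  next
    assume "P \<in> (\<Union>i\<in>{i\<in>S - {v}. {u, i} \<in> E}. (#) u ` paths (S - {u}) i v)"
    then obtain i P' where "P = u # P'" "{u, i} \<in> E" "P' \<in> paths (S - {u}) i v" by blast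
    moreover from this have "P' \<noteq> []" by (auto simp: paths_def is_path_def)
    ultimately show ?thesis using assms(1) by (auto simp: paths_def is_path_Cons)
  qed
qed

lemma sum_paths_Cons_decomp:
  assumes "finite S" "u \<in> S" "v \<in> S" "u \<noteq> v"
  shows "(\<Sum>P\<in>paths S u v. f P) = (if {u, v} \<in> E then f [u, v] else 0)
    + (\<Sum>i\<in>{i\<in>S - {v}. {u, i} \<in> E}. \<Sum>P\<in>paths (S - {u}) i v. f (u # P))"
proof -
  define N where "N = {i\<in>S - {v}. {u, i} \<in> E}"
  have hd_paths: "P \<in> paths T i v \<Longrightarrow> hd P = i" for T i P by (simp add: paths_def)
  have "(\<Sum>P\<in>(\<Union>i\<in>N. (#) u ` paths (S - {u}) i v). f P) = (\<Sum>i\<in>N. \<Sum>P\<in>(#) u ` paths (S - {u}) i v. f P)"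
  proof (rule sum.UNION_disjoint)
    show "\<forall>i\<in>N. \<forall>j\<in>N. i \<noteq> j \<longrightarrow> (#) u ` paths (S - {u}) i v \<inter> (#) u ` paths (S - {u}) j v = {}"
      using hd_paths by (auto simp: image_iff) metis
  qed (use assms(1) in \<open>auto simp: N_def finite_paths\<close>)
  also have "\<dots> = (\<Sum>i\<in>N. \<Sum>P\<in>paths (S - {u}) i v. f (u # P))"
    by (simp add: sum.reindex)
  finally have pieces: "(\<Sum>P\<in>(\<Union>i\<in>N. (#) u ` paths (S - {u}) i v). f P)
    = (\<Sum>i\<in>N. \<Sum>P\<in>paths (S - {u}) i v. f (u # P))" .
  have "[u, v] \<notin> (#) u ` paths (S - {u}) i v" if "i \<in> N" for i
    using that hd_paths[of "[v]"] by (auto simp: N_def)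
  then have "(\<Sum>P\<in>paths S u v. f P) = (\<Sum>P\<in>(if {u, v} \<in> E then {[u, v]} else {}). f P)
      + (\<Sum>P\<in>(\<Union>i\<in>N. (#) u ` paths (S - {u}) i v). f P)"
    unfolding paths_Cons_decomp[OF assms(2-4)] N_def[symmetric]
    by (intro sum.union_disjoint) (auto simp: N_def assms(1) finite_paths)
  then have "(\<Sum>P\<in>paths S u v. f P) = (if {u, v} \<in> E then f [u, v] else 0)
    + (\<Sum>i\<in>N. \<Sum>P\<in>paths (S - {u}) i v. f (u # P))"
    by (simp only: pieces) simp
  then show ?thesis by (simp only: N_def)
qed

lemma sum_paths_squares_Cons:
  assumes "finite S" "u \<in> S" "v \<in> S" "u \<noteq> v"
  shows "(\<Sum>P\<in>paths S u v. smult (path_weight w P) (\<eta> (S - set P) ^ 2))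
    = (if {u, v} \<in> E then smult (sq_weight w u v) (\<eta> (S - {u, v}) ^ 2) else 0)
      + (\<Sum>i\<in>{i\<in>S - {v}. {u, i} \<in> E}. smult (sq_weight w u i)
          (\<Sum>P\<in>paths (S - {u}) i v. smult (path_weight w P) (\<eta> (S - {u} - set P) ^ 2)))"
proof -
  have "path_weight w (u # P) = sq_weight w u i * path_weight w P"
    "S - set (u # P) = S - {u} - set P" if "P \<in> paths (S - {u}) i v" for i P
    using that by (auto simp: paths_def is_path_def neq_Nil_conv)
  then show ?thesis
    unfolding sum_paths_Cons_decomp[OF assms]
    by (simp add: smult_sum_right insert_commute cong: sum.cong)
qed

theorem heilmann_lieb_identity:
  assumes "finite S" "u \<in> S" "v \<in> S" "u \<noteq> v"
  shows "\<eta> (S - {u}) * \<eta> (S - {v}) - \<eta> S * \<eta> (S - {u, v})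
    = (\<Sum>P\<in>paths S u v. smult (path_weight w P) (\<eta> (S - set P) ^ 2))"
  using assms
proof (induction S arbitrary: u rule: finite_psubset_induct)
  case (psubset S)
  define T where "T = S - {u}"
  define N where "N = {i\<in>S - {v}. {u, i} \<in> E}"
  define Y where "Y = (if {u, v} \<in> E then smult (sq_weight w u v) (\<eta> (T - {v})) else 0)"
  define Z where "Z = (\<Sum>i\<in>N. smult (sq_weight w u i) (\<eta> (T - {i})))"
  define X where "X = (\<Sum>i\<in>N. smult (sq_weight w u i) (\<eta> (T - {i, v})))"
  have diffs: "S - {u, i} = T - {i}" "S - {v} - {u} = T - {v}" "S - {v} - {u, i} = T - {i, v}" for i
    unfolding T_def by auto
  have rec_S: "\<eta> S = [:-w1 u, 1:] * \<eta> T - Y - Z"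
    using eta_remove_vertex_split[OF psubset.hyps(1) psubset.prems(1,2)]
    unfolding Y_def Z_def N_def T_def[symmetric] diffs .
  have rec_Sv: "\<eta> (S - {v}) = [:-w1 u, 1:] * \<eta> (T - {v}) - X"
    using eta_remove_vertex[of "S - {v}" u] psubset.hyps(1) psubset.prems(1,3)
    unfolding X_def N_def diffs by simp
  have "\<eta> (S - {u}) * \<eta> (S - {v}) - \<eta> S * \<eta> (S - {u, v})
      = Y * \<eta> (T - {v}) + (Z * \<eta> (T - {v}) - \<eta> T * X)"
    unfolding T_def[symmetric] diffs(1) rec_S rec_Sv by (simp add: algebra_simps)
  also have "Z * \<eta> (T - {v}) - \<eta> T * X
      = (\<Sum>i\<in>N. smult (sq_weight w u i) (\<eta> (T - {i}) * \<eta> (T - {v}) - \<eta> T * \<eta> (T - {i, v})))"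
    unfolding X_def Z_def
    by (simp add: sum_distrib_left sum_distrib_right sum_subtractf smult_diff_right mult.commute)
  also have "\<dots> = (\<Sum>i\<in>N. smult (sq_weight w u i)
      (\<Sum>P\<in>paths T i v. smult (path_weight w P) (\<eta> (T - set P) ^ 2)))"
  proof (intro sum.cong refl arg_cong[where f = "smult _"])
    fix i assume "i \<in> N"
    then have "T \<subset> S" "i \<in> T" "v \<in> T" "i \<noteq> v"
      using singleton_notin_edges psubset.prems unfolding T_def N_def by auto
    then show "\<eta> (T - {i}) * \<eta> (T - {v}) - \<eta> T * \<eta> (T - {i, v})
      = (\<Sum>P\<in>paths T i v. smult (path_weight w P) (\<eta> (T - set P) ^ 2))"
      by (rule psubset.IH)
  qed
  also have "Y * \<eta> (T - {v}) + \<dots> = (\<Sum>P\<in>paths S u v. smult (path_weight w P) (\<eta> (S - set P) ^ 2))"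
    unfolding sum_paths_squares_Cons[OF psubset.hyps(1) psubset.prems] T_def N_def Y_def diffs(1)
    by (simp add: power2_eq_square)
  finally show ?case .
qed

definition paths_from :: "'a set \<Rightarrow> 'a \<Rightarrow> 'a list set" where
  "paths_from S u = {P. is_path S E P \<and> hd P = u}"

lemma finite_paths_from: "finite S \<Longrightarrow> finite (paths_from S u)"
  by (rule finite_subset[OF _ finite_subset_distinct]) (auto simp: paths_from_def is_path_def)

lemma paths_from_decomp:
  assumes "u \<in> S"
  shows "paths_from S u = insert [u] (\<Union>v\<in>S - {u}. paths S u v)"
proof (intro equalityI subsetI)
  fix P assume "P \<in> paths_from S u"
  then have P: "is_path S E P" "hd P = u" by (auto simp: paths_from_def)
  show "P \<in> insert [u] (\<Union>v\<in>S - {u}. paths S u v)"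
  proof (cases "last P = u")
    case True
    with P have "P = [u]"
      unfolding is_path_def by (metis distinct.simps(2) hd_Cons_tl last.simps last_in_set)
    then show ?thesis by simp
  next
    case False
    moreover have "last P \<in> S" using P(1) unfolding is_path_def by auto
    ultimately show ?thesis using P by (auto simp: paths_def)
  qed
qed (use assms in \<open>auto simp: paths_def paths_from_def is_path_def\<close>)

lemma sum_paths_from:
  assumes "finite S" "u \<in> S"
  shows "(\<Sum>P\<in>paths_from S u. f P) = f [u] + (\<Sum>v\<in>S - {u}. \<Sum>P\<in>paths S u v. f P)"
proof -
  have "(\<Sum>P\<in>(\<Union>v\<in>S - {u}. paths S u v). f P) = (\<Sum>v\<in>S - {u}. \<Sum>P\<in>paths S u v. f P)"
  proof (rule sum.UNION_disjoint)
    show "\<forall>v\<in>S - {u}. finite (paths S u v)" using assms(1) by (simp add: finite_paths)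
  qed (use assms(1) in \<open>auto simp: paths_def\<close>)
  moreover have "[u] \<notin> (\<Union>v\<in>S - {u}. paths S u v)" by (auto simp: paths_def)
  moreover have "finite (\<Union>v\<in>S - {u}. paths S u v)" using assms(1) by (simp add: finite_paths)
  ultimately show ?thesis unfolding paths_from_decomp[OF assms(2)] by simp
qed

theorem eta_wronskian_paths:
  assumes "finite S" "u \<in> S"
  shows "\<eta> (S - {u}) * pderiv (\<eta> S) - \<eta> S * pderiv (\<eta> (S - {u}))
    = (\<Sum>P\<in>paths_from S u. smult (path_weight w P) (\<eta> (S - set P) ^ 2))"
proof -
  have "pderiv (\<eta> S) = \<eta> (S - {u}) + (\<Sum>v\<in>S - {u}. \<eta> (S - {v}))"
    using assms by (simp add: pderiv_eta sum.remove)
  moreover have "pderiv (\<eta> (S - {u})) = (\<Sum>v\<in>S - {u}. \<eta> (S - {u, v}))"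
  proof -
    have "S - {u} - {v} = S - {u, v}" for v by auto
    then show ?thesis using assms(1) by (simp add: pderiv_eta)
  qed
  ultimately have "\<eta> (S - {u}) * pderiv (\<eta> S) - \<eta> S * pderiv (\<eta> (S - {u}))
    = \<eta> (S - {u}) ^ 2 + (\<Sum>v\<in>S - {u}. \<eta> (S - {u}) * \<eta> (S - {v}) - \<eta> S * \<eta> (S - {u, v}))"
    by (simp add: algebra_simps power2_eq_square sum_distrib_left sum_subtractf)
  also have "\<dots> = \<eta> (S - {u}) ^ 2
    + (\<Sum>v\<in>S - {u}. \<Sum>P\<in>paths S u v. smult (path_weight w P) (\<eta> (S - set P) ^ 2))"
    using assms by (intro arg_cong[where f = "(+) _"] sum.cong refl heilmann_lieb_identity) auto
  also have "\<dots> = (\<Sum>P\<in>paths_from S u. smult (path_weight w P) (\<eta> (S - set P) ^ 2))"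
    using assms by (simp add: sum_paths_from)
  finally show ?thesis .
qed

theorem order_eta_remove_path:
  assumes "finite S" "is_path S E P" "0 < path_weight w P"
  shows "order \<theta> (\<eta> S) \<le> order \<theta> (\<eta> (S - set P)) + 1"
proof -
  define u where "u = hd P"
  have "u \<in> S" using assms(2) unfolding u_def is_path_def by auto
  define p where "p = [:-\<theta>, 1:]"
  define s where "s = (order \<theta> (\<eta> S) + order \<theta> (\<eta> (S - {u}))) div 2"
  have "p ^ (2 * s - 1) dvd \<eta> (S - {u}) * pderiv (\<eta> S) - \<eta> S * pderiv (\<eta> (S - {u}))"
    using linear_power_dvd_wronskian[of \<theta> "\<eta> S" "\<eta> (S - {u})"]
    unfolding p_def s_def by (rule power_le_dvd) linarith
  then have sos: "p ^ (2 * s - 1) dvd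
      (\<Sum>P\<in>paths_from S u. smult (path_weight w P) (\<eta> (S - set P) ^ 2))"
    using assms(1) \<open>u \<in> S\<close> by (simp add: eta_wronskian_paths)
  have divides: "p ^ s dvd \<eta> (S - set Q)" if "Q \<in> paths_from S u" "0 < path_weight w Q" for Q
    using linear_power_dvd_weighted_sum_squares[OF finite_paths_from[OF assms(1)] _ that
        sos[unfolded p_def]]
    unfolding p_def by (simp add: path_weight_nonneg)
  have "[u] \<in> paths_from S u" "P \<in> paths_from S u"
    using \<open>u \<in> S\<close> assms(2) unfolding paths_from_def u_def by (auto simp: is_path_def)
  then have "p ^ s dvd \<eta> (S - {u})" "p ^ s dvd \<eta> (S - set P)"
    using divides[of "[u]"] divides[of P] assms(3) by simp_all
  then have "s \<le> order \<theta> (\<eta> (S - {u}))" "s \<le> order \<theta> (\<eta> (S - set P))"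
    using assms(1) eta_nonzero unfolding p_def by (simp_all add: order_divides)
  then show ?thesis unfolding s_def by linarith
qed

end

lemma eta_del_edges: "eta (V - D) (del_edges E D) w w1 = eta (V - D) E w w1"
proof -
  have "induced_edges (del_edges E D) S = induced_edges E S" if "S \<subseteq> V - D" for S
    using that unfolding induced_edges_def del_edges_def by auto
  then show ?thesis unfolding eta_def by (intro sum.cong refl) auto
qed

theorem corollary4p6:
  fixes V :: "'a set" and E :: "'a set set" and w :: "'a set \<Rightarrow> complex"
    and w1 :: "'a \<Rightarrow> real" and \<theta> :: real and ps :: "'a list"
  assumes "simple_graph V E"
    and "\<forall>e\<in>E. w e \<noteq> 0"
    and "is_path V E ps" and "length ps \<ge> 2"
  shows "int (mult \<theta> (del_verts V (set ps)) (del_edges E (set ps)) w w1)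
           \<ge> int (mult \<theta> V E w w1) - 1"
proof -
  interpret edge_weighted_graph E w w1
    using assms(1) unfolding simple_graph_def by unfold_locales blast
  have "finite V" using assms(1) unfolding simple_graph_def by blast
  moreover have "0 < path_weight w ps"
    using assms(2,3) unfolding is_path_def by (intro path_weight_pos) blast
  ultimately have "order \<theta> (\<eta> V) \<le> order \<theta> (\<eta> (V - set ps)) + 1"
    using assms(3) by (intro order_eta_remove_path)
  then show ?thesis unfolding mult_def del_verts_def eta_del_edges by linarith
qed

end
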